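(* Let $U\subset M_{\mathbb R}$ be a convex open set, let $\mathbf w=(m,P,\Theta)$ be a wall in $U$ with $P$ a tropical hyperplane in $U$, and write $\mathrm{Log}(\Theta)=\sum_{j,k\ge1}a_{jk}\,z^{km}\check\partial_n\,t^j$ as in the context. Let $u_2$ be an affine function on $U$ with $P=\{u_2=0\}$ and $u_2>0$ on $H_+$, and put $$\delta_m:=\Big(\frac{1}{\hbar\pi}\Big)^{1/2}e^{-u_2^2/\hbar}\,du_2 .$$ Then the element $\Pi:=-\delta_m\cdot\mathrm{Log}(\Theta)=-\sum_{j,k\ge1}a_{jk}\,\delta_m\,z^{km}\check\partial_n\,t^j\in\widehat{\mathbf G}^1(U)$ satisfies the Maurer–Cartan equation $\bar\partial\Pi+\tfrac12[\Pi,\Pi]=0$.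
   Context: Let $M\cong\mathbb Z^n$ be a lattice, $N=\mathrm{Hom}(M,\mathbb Z)$, $(m,n)\in\mathbb Z$ the natural pairing, $M_{\mathbb R}=M\otimes\mathbb R$. Open subsets of $M_{\mathbb R}$ carry the standard affine structure with flat connection $\nabla$ and affine coordinates $x_1,\dots,x_n$. Fix a Riemannian metric $g=(g_{jk})$ (of Hessian type) on $U$ and a parameter $\hbar>0$. For $n\in N$ (coordinates $n^j$) let $\partial_n:=\frac{\hbar}{4\pi}\sum_{j,k}n^jg_{jk}\,\partial/\partial x_k$. Let $R=\mathbb C[[t]]$, $\mathbf m=tR$. Let $\Omega^k_\hbar(U)$ be the space of complex $k$-forms on $U$ depending smoothly on $\hbar\in\mathbb R_{>0}$. $\mathbf G^*(U)$ is the space of finite sums $\sum\alpha_m^n\,z^m\check\partial_n$ with $\alpha_m^n\in\Omega^*_\hbar(U)$, $m\in M$, where $z^m$ and $\check\partial_n$ are formal symbols with $\check\partial_n$ additive in $n\in N$; it is graded by form degree, with differential $\bar\partial(\alpha z^m\check\partial_n)=(d\alpha)z^m\check\partial_n$ and bracket $$[\alpha z^m\check\partial_n,\beta z^{m'}\check\partial_{n'}]=\alpha\wedge\beta\,z^{m+m'}\check\partial_{(m',n)n'-(m,n')n}+\alpha\wedge(\nabla_{\partial_n}\beta)\,z^{m+m'}\check\partial_{n'}-(-1)^{|\alpha||\beta|}\beta\wedge(\nabla_{\partial_{n'}}\alpha)\,z^{m+m'}\check\partial_n$$ (extended $R$-bilinearly). $\widehat{\mathbf G}^*(U):=\varprojlim_N\mathbf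 G^*(U)\otimes_{\mathbb C}R/\mathbf m^{N+1}$. A wall $\mathbf w=(m,P,\Theta)$: $m\in M\setminus\{0\}$; $P$ an oriented tropical hyperplane (codimension one affine hyperplane with rational slope) in $U$ parallel to $m$, dividing $U$ into two open half-spaces $H_+$, $H_-$, where $H_+$ is the side into which the normal $\nu_P$ points, $\nu_P$ chosen so that $TP\oplus\mathbb R\nu_P$ has the orientation of $U$; $n\in N$ the unique primitive element vanishing on $TP$ with $(\nu_P,n)<0$; and $\mathrm{Log}(\Theta)=\sum_{j,k\ge1}a_{jk}z^{km}\check\partial_nt^j$ with $a_{jk}\in\mathbb C$ and, for each $j$, $a_{jk}\neq0$ for only finitely many $k$. *)

theory Defs
  imports "HOL-Analysis.Analysis" "HOL-Combinatorics.Permutations"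
begin

text \<open>M = int^'n, N = Hom(M,Z) = int^'n via the dual basis; M_R = real^'n with affine
  coordinates x_i = x $ i.\<close>

definition lpair :: "int^('n::finite) \<Rightarrow> int^'n \<Rightarrow> int" where
  "lpair m n = (\<Sum>i\<in>UNIV. m $ i * n $ i)"

definition rpair :: "real^('n::finite) \<Rightarrow> int^'n \<Rightarrow> real" where
  "rpair v n = (\<Sum>i\<in>UNIV. v $ i * real_of_int (n $ i))"

definition primitive :: "int^('n::finite) \<Rightarrow> bool" where
  "primitive n \<longleftrightarrow> n \<noteq> 0 \<and> (\<forall>(k::int) n'. n = k *s n' \<longrightarrow> k = 1 \<or> k = -1)"

definition pd :: "('n::finite) \<Rightarrow> (real^'n \<Rightarrow> 'a::real_normed_vector) \<Rightarrow> real^'n \<Rightarrow> 'a" where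
  "pd k f x = vector_derivative (\<lambda>s. f (x + s *\<^sub>R axis k 1)) (at 0)"

text \<open>Iterated partial derivatives of a function of (hbar, x); None = d/d hbar.\<close>
fun iter_pd :: "('n::finite) option list \<Rightarrow> (real \<Rightarrow> real^'n \<Rightarrow> complex) \<Rightarrow> real \<Rightarrow> real^'n \<Rightarrow> complex" where
  "iter_pd [] f = f"
| "iter_pd (None # ds) f = (\<lambda>h x. vector_derivative (\<lambda>s. iter_pd ds f s x) (at h))"
| "iter_pd (Some k # ds) f = (\<lambda>h x. pd k (\<lambda>y. iter_pd ds f h y) x)"

definition smooth_HU :: "(real^('n::finite)) set \<Rightarrow> (real \<Rightarrow> real^'n \<Rightarrow> complex) \<Rightarrow> bool" where
  "smooth_HU U f \<longleftrightarrow>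
     (\<forall>ds. continuous_on ({0<..} \<times> U) (\<lambda>(h, x). iter_pd ds f h x) \<and>
        (\<forall>h x. 0 < h \<and> x \<in> U \<longrightarrow>
           (\<lambda>s. iter_pd ds f s x) differentiable (at h) \<and>
           (\<forall>k. (\<lambda>s. iter_pd ds f h (x + s *\<^sub>R axis k 1)) differentiable (at 0))))"

definition hessian_metric :: "(real^('n::finite)) set \<Rightarrow> (real^'n \<Rightarrow> real^'n^'n) \<Rightarrow> bool" where
  "hessian_metric U g \<longleftrightarrow>
     (\<forall>j k. smooth_HU U (\<lambda>h x. complex_of_real (g x $ j $ k))) \<and>
     (\<forall>x\<in>U. \<forall>j k. g x $ j $ k = g x $ k $ j) \<and>
     (\<forall>x\<in>U. \<forall>v. v \<noteq> 0 \<longrightarrow> (\<Sum>j\<in>UNIV. \<Sum>k\<in>UNIV. v $ j * g x $ j $ k * v $ k) > 0) \<and>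
     (\<forall>x\<in>U. \<exists>V \<phi>. open V \<and> x \<in> V \<and> smooth_HU (V \<inter> U) (\<lambda>h y. complex_of_real (\<phi> y)) \<and>
        (\<forall>y\<in>V \<inter> U. \<forall>j k. g y $ j $ k = pd j (pd k \<phi>) y))"

text \<open>A (mixed degree) complex form on U depending on hbar: alpha hbar x [i1,...,ik] is the value
  of the degree-k part on the basis vectors (e_i1,...,e_ik) (so alpha = sum over ordered index
  tuples of (1/k!) alpha(i1..ik) dx_i1 ^ ... ^ dx_ik).\<close>
type_synonym ('n) form = "real \<Rightarrow> real^('n::finite) \<Rightarrow> 'n list \<Rightarrow> complex"

definition zform :: "('n::finite) form" where "zform = (\<lambda>h x is. 0)"

definition zero_form :: "(real \<Rightarrow> real^('n::finite) \<Rightarrow> complex) \<Rightarrow> 'n form" where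
  "zero_form f = (\<lambda>h x is. if is = [] then f h x else 0)"

definition deg_part :: "nat \<Rightarrow> ('n::finite) form \<Rightarrow> 'n form" where
  "deg_part k \<alpha> = (\<lambda>h x is. if length is = k then \<alpha> h x is else 0)"

definition wedge :: "('n::finite) form \<Rightarrow> 'n form \<Rightarrow> 'n form" where
  "wedge \<alpha> \<beta> = (\<lambda>h x is.
     \<Sum>k\<le>length is. \<Sum>\<sigma>\<in>{\<sigma>. \<sigma> permutes {..<length is}}.
       of_int (sign \<sigma>) / (fact k * fact (length is - k)) *
       \<alpha> h x (map (\<lambda>p. is ! \<sigma> p) [0..<k]) * \<beta> h x (map (\<lambda>p. is ! \<sigma> p) [k..<length is]))"

definition ext_d :: "('n::finite) form \<Rightarrow> 'n form" where
  "ext_d \<alpha> = (\<lambda>h x is. \<Sum>j<length is.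
     (-1) ^ j * pd (is ! j) (\<lambda>y. \<alpha> h y (take j is @ drop (Suc j) is)) x)"

definition nabla :: "(real \<Rightarrow> real^('n::finite) \<Rightarrow> real^'n) \<Rightarrow> 'n form \<Rightarrow> 'n form" where
  "nabla v \<beta> = (\<lambda>h x is. \<Sum>k\<in>UNIV. complex_of_real (v h x $ k) * pd k (\<lambda>y. \<beta> h y is) x)"

definition dvec :: "(real^('n::finite) \<Rightarrow> real^'n^'n) \<Rightarrow> int^'n \<Rightarrow> real \<Rightarrow> real^'n \<Rightarrow> real^'n" where
  "dvec g n = (\<lambda>h x. \<chi> k. h / (4 * pi) * (\<Sum>j\<in>UNIV. real_of_int (n $ j) * g x $ j $ k))"

definition alternating :: "('n::finite) form \<Rightarrow> bool" where
  "alternating \<alpha> \<longleftrightarrow> (\<forall>h x is \<sigma>. \<sigma> permutes {..<length is} \<longrightarrow>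
      \<alpha> h x (map (\<lambda>p. is ! \<sigma> p) [0..<length is]) = of_int (sign \<sigma>) * \<alpha> h x is)"

definition is_kform :: "(real^('n::finite)) set \<Rightarrow> nat \<Rightarrow> 'n form \<Rightarrow> bool" where
  "is_kform U k \<alpha> \<longleftrightarrow> alternating \<alpha> \<and> (\<forall>h x is. length is \<noteq> k \<longrightarrow> \<alpha> h x is = 0) \<and>
     (\<forall>is. smooth_HU U (\<lambda>h x. \<alpha> h x is))"

text \<open>An element of G is stored canonically as A m c = the form coefficient of
  z^m d_{e_c} (e_c the standard basis of N); i.e. A = sum_{m,c} (A m c) z^m d_{e_c},
  using additivity of d_n in n. An element of hat G = G[[t]] is a sequence N |-> (t^N-coefficient).\<close>
type_synonym ('n) G = "int^('n::finite) \<Rightarrow> 'n \<Rightarrow> 'n form"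
type_synonym ('n) Ghat = "nat \<Rightarrow> ('n::finite) G"

definition mono :: "('n::finite) form \<Rightarrow> int^'n \<Rightarrow> int^'n \<Rightarrow> 'n G" where
  "mono \<alpha> m n = (\<lambda>m' c. if m' = m then (\<lambda>h x is. of_int (n $ c) * \<alpha> h x is) else zform)"

definition Gsupp :: "('n::finite) G \<Rightarrow> (int^'n) set" where
  "Gsupp A = {m. \<exists>c. A m c \<noteq> zform}"

text \<open>The bracket on generators alpha z^m d_n, beta z^m' d_n' with alpha of degree p, beta of degree q.\<close>
definition br_gen :: "(real^('n::finite) \<Rightarrow> real^'n^'n) \<Rightarrow> nat \<Rightarrow> nat \<Rightarrow>
    'n form \<Rightarrow> int^'n \<Rightarrow> int^'n \<Rightarrow> 'n form \<Rightarrow> int^'n \<Rightarrow> int^'n \<Rightarrow> 'n G" where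
  "br_gen g p q \<alpha> m n \<beta> m' n' = (\<lambda>M c h x is.
       mono (wedge \<alpha> \<beta>) (m + m') (lpair m' n *s n' - lpair m n' *s n) M c h x is
     + mono (wedge \<alpha> (nabla (dvec g n) \<beta>)) (m + m') n' M c h x is
     - (-1) ^ (p * q) * mono (wedge \<beta> (nabla (dvec g n') \<alpha>)) (m + m') n M c h x is)"

definition Gbr :: "(real^('n::finite) \<Rightarrow> real^'n^'n) \<Rightarrow> 'n G \<Rightarrow> 'n G \<Rightarrow> 'n G" where
  "Gbr g A B = (\<lambda>M c h x is.
     \<Sum>m\<in>Gsupp A. \<Sum>m'\<in>Gsupp B. \<Sum>a\<in>UNIV. \<Sum>b\<in>UNIV. \<Sum>p\<le>length is. \<Sum>q\<le>length is.
       br_gen g p q (deg_part p (A m a)) m (axis a 1) (deg_part q (B m' b)) m' (axis b 1) M c h x is)"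

definition Ghat_br :: "(real^('n::finite) \<Rightarrow> real^'n^'n) \<Rightarrow> 'n Ghat \<Rightarrow> 'n Ghat \<Rightarrow> 'n Ghat" where
  "Ghat_br g A B = (\<lambda>N M c h x is. \<Sum>j\<le>N. Gbr g (A j) (B (N - j)) M c h x is)"

definition Ghat_dbar :: "('n::finite) Ghat \<Rightarrow> 'n Ghat" where
  "Ghat_dbar A = (\<lambda>N M c. ext_d (A N M c))"

definition in_Ghat :: "(real^('n::finite)) set \<Rightarrow> nat \<Rightarrow> 'n Ghat \<Rightarrow> bool" where
  "in_Ghat U k A \<longleftrightarrow> (\<forall>N. finite (Gsupp (A N))) \<and> (\<forall>N M c. is_kform U k (A N M c))"

definition maurer_cartan :: "(real^('n::finite)) set \<Rightarrow> (real^'n \<Rightarrow> real^'n^'n) \<Rightarrow> 'n Ghat \<Rightarrow> bool" where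
  "maurer_cartan U g A \<longleftrightarrow> (\<forall>N M c h x is. 0 < h \<longrightarrow> x \<in> U \<longrightarrow>
      Ghat_dbar A N M c h x is + 1/2 * Ghat_br g A A N M c h x is = 0)"

definition tangent_space :: "(real^('n::finite)) set \<Rightarrow> (real^'n) set" where
  "tangent_space P = span {y - x | x y. x \<in> P \<and> y \<in> P}"

definition tropical_hyperplane :: "(real^('n::finite)) set \<Rightarrow> (real^'n) set \<Rightarrow> bool" where
  "tropical_hyperplane U P \<longleftrightarrow> P \<noteq> {} \<and>
     (\<exists>(n0::int^'n) (c::real). n0 \<noteq> 0 \<and> P = {x \<in> U. rpair x n0 = c})"

definition half_plus :: "(real^('n::finite)) set \<Rightarrow> (real^'n) set \<Rightarrow> real^'n \<Rightarrow> (real^'n) set" where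
  "half_plus U P \<nu> = {x \<in> U. \<exists>p\<in>P. \<exists>s>0. x - p - s *\<^sub>R \<nu> \<in> tangent_space P}"

text \<open>A wall (m, P, Theta) with oriented P, normal nu, normal covector n and
  Log Theta = sum_{j,k>=1} a j k z^{km} d_n t^j.\<close>
definition is_wall :: "(real^('n::finite)) set \<Rightarrow> int^'n \<Rightarrow> (real^'n) set \<Rightarrow> real^'n \<Rightarrow> int^'n \<Rightarrow>
    (nat \<Rightarrow> nat \<Rightarrow> complex) \<Rightarrow> bool" where
  "is_wall U m P \<nu> n a \<longleftrightarrow>
     m \<noteq> 0 \<and> tropical_hyperplane U P \<and>
     (\<chi> i. real_of_int (m $ i)) \<in> tangent_space P \<and>
     \<nu> \<notin> tangent_space P \<and>
     primitive n \<and> (\<forall>v\<in>tangent_space P. rpair v n = 0) \<and> rpair \<nu> n < 0 \<and>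
     (\<forall>j\<ge>1. finite {k. 1 \<le> k \<and> a j k \<noteq> 0})"

definition delta_m :: "(real^('n::finite) \<Rightarrow> real) \<Rightarrow> 'n form" where
  "delta_m u2 = wedge (zero_form (\<lambda>h x. complex_of_real (sqrt (1 / (h * pi)) * exp (- (u2 x)\<^sup>2 / h))))
                      (ext_d (zero_form (\<lambda>h x. complex_of_real (u2 x))))"

definition wall_Pi :: "(real^('n::finite) \<Rightarrow> real) \<Rightarrow> int^'n \<Rightarrow> int^'n \<Rightarrow> (nat \<Rightarrow> nat \<Rightarrow> complex) \<Rightarrow> 'n Ghat" where
  "wall_Pi u2 m n a = (\<lambda>j M c h x is.
     if j = 0 then 0 else
     - (\<Sum>k\<in>{k. 1 \<le> k \<and> a j k \<noteq> 0}. a j k * mono (delta_m u2) (int k *s m) n M c h x is))"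

end

(*
  On U the form delta_m is phi du2 with phi = (hbar pi)^(-1/2) exp(-u2^2/hbar), and every
  coefficient of Pi is a constant multiple of it.  Since phi depends on x only through the affine
  function u2, d(phi du2) = dphi wedge du2 = 0, so dbar Pi = 0.  Every term of [Pi, Pi] is a wedge of
  two 1-forms proportional to du2 (the covariant derivative along partial_n of a multiple of
  phi du2 is again a multiple of du2), so [Pi, Pi] = 0 as well.  Smoothness in (hbar, x) holds because the functions p(1/hbar, u2) phi, p a polynomial,
  are continuous and form a class closed under partial derivatives.
*)

theory Submission
  imports Defs
begin

lemma open_axis_line_vimage:
  fixes x :: "real^'n::finite"
  assumes "open U"
  shows "open ((\<lambda>s. x + s *\<^sub>R axis k 1) -` U)"
  using assms by (intro open_vimage continuous_intros)

lemma pd_cong_open: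
  assumes "open U" "x \<in> U" "\<And>y. y \<in> U \<Longrightarrow> f y = g y"
  shows "pd k f x = pd k g x"
  unfolding pd_def
  using eventually_nhds_in_open[OF open_axis_line_vimage[OF assms(1)], of 0 x k] assms(2,3)
  by (intro vector_derivative_cong_eq) (auto elim: eventually_mono)

lemma iter_pd_cong_open:
  assumes "open U" "\<And>h y. y \<in> U \<Longrightarrow> f h y = g h y" "x \<in> U"
  shows "iter_pd ds f h x = iter_pd ds g h x"
  using assms(3)
proof (induction ds arbitrary: h x)
  case Nil
  then show ?case using assms(2) by simp
next
  case (Cons d ds)
  show ?case
  proof (cases d)
    case None
    then show ?thesis using Cons by simp
  next
    case (Some k)
    then show ?thesis
      using Cons pd_cong_open[OF assms(1) Cons.prems, of "iter_pd ds f h" "iter_pd ds g h" k] by simp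
  qed
qed

locale derivative_closed =
  fixes C :: "(real \<Rightarrow> real^('n::finite) \<Rightarrow> complex) \<Rightarrow> bool"
  assumes continuous: "C F \<Longrightarrow> continuous_on ({0<..} \<times> UNIV) (\<lambda>(h, x). F h x)"
    and hbar_derivative: "C F \<Longrightarrow>
      \<exists>F'. C F' \<and> (\<forall>h>0. \<forall>x. ((\<lambda>s. F s x) has_vector_derivative F' h x) (at h))"
    and axis_derivative: "C F \<Longrightarrow>
      \<exists>F'. C F' \<and> (\<forall>h>0. \<forall>x. ((\<lambda>s. F h (x + s *\<^sub>R axis k 1)) has_vector_derivative F' h x) (at 0))"
begin

lemma iter_pd_closed:
  assumes "C F"
  shows "\<exists>F'. C F' \<and> (\<forall>h>0. \<forall>x. iter_pd ds F h x = F' h x)"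
proof (induction ds)
  case Nil
  then show ?case using assms by auto
next
  case (Cons d ds)
  then obtain F' where F': "C F'" "\<And>h x. 0 < h \<Longrightarrow> iter_pd ds F h x = F' h x" by blast
  show ?case
  proof (cases d)
    case None
    obtain F'' where F'': "C F''" "\<And>h x. 0 < h \<Longrightarrow> ((\<lambda>s. F' s x) has_vector_derivative F'' h x) (at h)"
      using hbar_derivative[OF F'(1)] by blast
    have "((\<lambda>s. iter_pd ds F s x) has_vector_derivative F'' h x) (at h)" if "0 < h" for h x
      using F'(2) that
      by (intro has_vector_derivative_transform_within_open[OF F''(2) open_greaterThan]) auto
    then show ?thesis using None F''(1) by (auto intro: vector_derivative_at)
  next
    case (Some k)
    obtain F'' where F'': "C F''"
      "\<And>h x. 0 < h \<Longrightarrow> ((\<lambda>s. F' h (x + s *\<^sub>R axis k 1)) has_vector_derivative F'' h x) (at 0)"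
      using axis_derivative[OF F'(1)] by blast
    then show ?thesis using Some F'(2) by (auto simp: pd_def intro: vector_derivative_at)
  qed
qed

lemma smooth_HU_of_eq_on:
  assumes "open U" "C F" "\<And>h x. x \<in> U \<Longrightarrow> f h x = F h x"
  shows "smooth_HU U f"
  unfolding smooth_HU_def
proof (intro allI conjI impI)
  fix ds :: "'n option list"
  obtain F' where F': "C F'" "\<And>h x. 0 < h \<Longrightarrow> iter_pd ds F h x = F' h x"
    using iter_pd_closed[OF assms(2)] by blast
  have eq: "iter_pd ds f h x = F' h x" if "0 < h" "x \<in> U" for h x
    using iter_pd_cong_open[OF assms(1,3)] F'(2) that by simp
  have "continuous_on ({0<..} \<times> U) (\<lambda>(h, x). F' h x)"
    using continuous[OF F'(1)] by (rule continuous_on_subset) auto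
  then show "continuous_on ({0<..} \<times> U) (\<lambda>(h, x). iter_pd ds f h x)"
    by (rule continuous_on_cong[THEN iffD1, rotated 2]) (auto simp: eq)
  fix h :: real and x k
  assume hx: "0 < h \<and> x \<in> U"
  obtain Fh where Fh: "\<And>h x. 0 < h \<Longrightarrow> ((\<lambda>s. F' s x) has_vector_derivative Fh h x) (at h)"
    using hbar_derivative[OF F'(1)] by blast
  have "((\<lambda>s. iter_pd ds f s x) has_vector_derivative Fh h x) (at h)"
    using hx eq by (intro has_vector_derivative_transform_within_open[OF Fh open_greaterThan]) auto
  then show "(\<lambda>s. iter_pd ds f s x) differentiable at h"
    by (rule differentiableI_vector)
  obtain Fk where Fk:
    "\<And>h x. 0 < h \<Longrightarrow> ((\<lambda>s. F' h (x + s *\<^sub>R axis k 1)) has_vector_derivative Fk h x) (at 0)"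
    using axis_derivative[OF F'(1)] by blast
  have "((\<lambda>s. iter_pd ds f h (x + s *\<^sub>R axis k 1)) has_vector_derivative Fk h x) (at 0)"
    using hx eq open_axis_line_vimage[OF assms(1), of x k]
    by (intro has_vector_derivative_transform_within_open[OF Fk]) auto
  then show "(\<lambda>s. iter_pd ds f h (x + s *\<^sub>R axis k 1)) differentiable at 0"
    by (rule differentiableI_vector)
qed

end

section \<open>The Gaussian factor of delta_m\<close>

definition gauss :: "real^('n::finite) \<Rightarrow> real \<Rightarrow> real \<Rightarrow> real^'n \<Rightarrow> complex" where
  "gauss l b h x = complex_of_real (sqrt (1 / (h * pi)) * exp (- (l \<bullet> x + b)\<^sup>2 / h))"

lemma has_real_derivative_sqrt_inverse:
  assumes "0 < h"
  shows "((\<lambda>s. sqrt (1 / (s * pi))) has_real_derivative - sqrt (1 / (h * pi)) / (2 * h)) (at h)"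
proof -
  have "((\<lambda>s. sqrt (1 / (s * pi))) has_real_derivative
      inverse (sqrt (1 / (h * pi))) / 2 * (- (pi / (h * pi)\<^sup>2))) (at h)"
    using assms by (auto intro!: derivative_eq_intros simp: power2_eq_square mult_less_0_iff)
  moreover have "inverse (sqrt (1 / (h * pi))) / 2 * (- (pi / (h * pi)\<^sup>2)) = - sqrt (1 / (h * pi)) / (2 * h)"
    using assms by (simp add: real_sqrt_divide field_simps power2_eq_square real_div_sqrt)
  ultimately show ?thesis by simp
qed

lemma has_vector_derivative_gauss_hbar:
  assumes "0 < h"
  shows "((\<lambda>s. gauss l b s x) has_vector_derivative
     of_real ((l \<bullet> x + b)\<^sup>2 / h\<^sup>2 - 1 / (2 * h)) * gauss l b h x) (at h)"
proof -
  have "((\<lambda>s. sqrt (1 / (s * pi)) * exp (- (l \<bullet> x + b)\<^sup>2 / s)) has_real_derivative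
     ((l \<bullet> x + b)\<^sup>2 / h\<^sup>2 - 1 / (2 * h)) * (sqrt (1 / (h * pi)) * exp (- (l \<bullet> x + b)\<^sup>2 / h))) (at h)"
    using assms by (auto intro!: derivative_eq_intros has_real_derivative_sqrt_inverse
        simp: power2_eq_square field_simps mult_less_0_iff)
  from has_vector_derivative_of_real[OF this] show ?thesis
    by (simp only: gauss_def of_real_mult)
qed

lemma inner_axis_line: "l \<bullet> (x + s *\<^sub>R axis k 1) + b = (l \<bullet> x + b) + s * l $ k"
  by (simp add: inner_add_right inner_axis algebra_simps)

lemma has_vector_derivative_gauss_axis:
  assumes "0 < h"
  shows "((\<lambda>s. gauss l b h (x + s *\<^sub>R axis k 1)) has_vector_derivative
     of_real (- 2 * l $ k * (l \<bullet> x + b) / h) * gauss l b h x) (at 0)"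
proof -
  have "((\<lambda>s. sqrt (1 / (h * pi)) * exp (- ((l \<bullet> x + b) + s * l $ k)\<^sup>2 / h)) has_real_derivative
      (- 2 * l $ k * (l \<bullet> x + b) / h) * (sqrt (1 / (h * pi)) * exp (- (l \<bullet> x + b)\<^sup>2 / h))) (at 0)"
    using assms by (auto intro!: derivative_eq_intros simp: power2_eq_square field_simps)
  from has_vector_derivative_of_real[OF this] show ?thesis
    by (simp only: gauss_def of_real_mult inner_axis_line)
qed

lemma has_vector_derivative_affine_axis:
  "((\<lambda>s. complex_of_real (l \<bullet> (x + s *\<^sub>R axis k 1) + b)) has_vector_derivative of_real (l $ k)) (at 0)"
proof -
  have "((\<lambda>s. (l \<bullet> x + b) + s * l $ k) has_real_derivative l $ k) (at 0)"
    by (auto intro!: derivative_eq_intros)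
  from has_vector_derivative_of_real[OF this] show ?thesis
    by (simp only: inner_axis_line)
qed

inductive gauss_poly :: "real^('n::finite) \<Rightarrow> real \<Rightarrow> (real \<Rightarrow> real^'n \<Rightarrow> complex) \<Rightarrow> bool"
  for l b where
  gauss: "gauss_poly l b (gauss l b)"
| scale: "gauss_poly l b f \<Longrightarrow> gauss_poly l b (\<lambda>h x. c * f h x)"
| add: "gauss_poly l b f \<Longrightarrow> gauss_poly l b g \<Longrightarrow> gauss_poly l b (\<lambda>h x. f h x + g h x)"
| divide_hbar: "gauss_poly l b f \<Longrightarrow> gauss_poly l b (\<lambda>h x. f h x / of_real h)"
| mult_affine: "gauss_poly l b f \<Longrightarrow> gauss_poly l b (\<lambda>h x. of_real (l \<bullet> x + b) * f h x)"

lemma gauss_poly_continuous: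
  "gauss_poly l b f \<Longrightarrow> continuous_on ({0<..} \<times> UNIV) (\<lambda>(h, x). f h x)"
proof (induction rule: gauss_poly.induct)
  case gauss
  show ?case
    by (auto simp: gauss_def split_beta intro!: continuous_intros)
qed (auto simp: split_beta intro!: continuous_intros)

lemma gauss_poly_hbar_derivative:
  "gauss_poly l b f \<Longrightarrow>
     \<exists>f'. gauss_poly l b f' \<and> (\<forall>h>0. \<forall>x. ((\<lambda>s. f s x) has_vector_derivative f' h x) (at h))"
proof (induction rule: gauss_poly.induct)
  case gauss
  let ?w = "\<lambda>x. complex_of_real (l \<bullet> x + b)"
  let ?f' = "\<lambda>h x. ?w x * (?w x * gauss l b h x / of_real h) / of_real h + (-1/2) * (gauss l b h x / of_real h)"
  have "gauss_poly l b ?f'"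
    by (intro gauss_poly.intros)
  moreover have "((\<lambda>s. gauss l b s x) has_vector_derivative ?f' h x) (at h)" if "0 < h" for h x
  proof -
    have "((\<lambda>s. gauss l b s x) has_vector_derivative
        of_real ((l \<bullet> x + b)\<^sup>2 / h\<^sup>2 - 1 / (2 * h)) * gauss l b h x) (at h)"
      by (rule has_vector_derivative_gauss_hbar[OF that])
    also have "of_real ((l \<bullet> x + b)\<^sup>2 / h\<^sup>2 - 1 / (2 * h)) * gauss l b h x = ?f' h x"
      using that by (simp add: power2_eq_square field_simps)
    finally show ?thesis .
  qed
  ultimately show ?case by blast
next
  case (scale f c)
  then obtain f' where "gauss_poly l b f'"
      "\<And>h x. 0 < h \<Longrightarrow> ((\<lambda>s. f s x) has_vector_derivative f' h x) (at h)"
    by blast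
  then show ?case
    by (intro exI[of _ "\<lambda>h x. c * f' h x"]) (auto intro: gauss_poly.scale derivative_intros)
next
  case (add f g)
  then show ?case by (auto intro!: gauss_poly.intros derivative_intros)
next
  case (divide_hbar f)
  then obtain f' where f': "gauss_poly l b f'"
      "\<And>h x. 0 < h \<Longrightarrow> ((\<lambda>s. f s x) has_vector_derivative f' h x) (at h)"
    by blast
  let ?g = "\<lambda>h x. f' h x / of_real h + (-1) * (f h x / of_real h / of_real h)"
  have "gauss_poly l b ?g"
    using f'(1) divide_hbar.hyps by (intro gauss_poly.intros)
  moreover have "((\<lambda>s. f s x / of_real s) has_vector_derivative ?g h x) (at h)" if "0 < h" for h x
  proof -
    have "((\<lambda>s. 1 / s) has_real_derivative - 1 / h\<^sup>2) (at h)"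
      using that by (auto intro!: derivative_eq_intros simp: power2_eq_square)
    from has_vector_derivative_scaleR[OF this f'(2)[OF that]]
    show ?thesis
      using that by (simp add: scaleR_conv_of_real field_simps power2_eq_square)
  qed
  ultimately show ?case by blast
next
  case (mult_affine f)
  then obtain f' where f': "gauss_poly l b f'"
      "\<And>h x. 0 < h \<Longrightarrow> ((\<lambda>s. f s x) has_vector_derivative f' h x) (at h)"
    by blast
  have "gauss_poly l b (\<lambda>h x. of_real (l \<bullet> x + b) * f' h x)"
    using f'(1) by (rule gauss_poly.mult_affine)
  moreover have "((\<lambda>s. of_real (l \<bullet> x + b) * f s x) has_vector_derivative
      of_real (l \<bullet> x + b) * f' h x) (at h)" if "0 < h" for h x
    using f'(2)[OF that] by (rule has_vector_derivative_mult_right)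
  ultimately show ?case by blast
qed

lemma gauss_poly_axis_derivative:
  "gauss_poly l b f \<Longrightarrow>
     \<exists>f'. gauss_poly l b f' \<and>
       (\<forall>h>0. \<forall>x. ((\<lambda>s. f h (x + s *\<^sub>R axis k 1)) has_vector_derivative f' h x) (at 0))"
proof (induction rule: gauss_poly.induct)
  case gauss
  let ?f' = "\<lambda>h x. of_real (- 2 * l $ k) * (of_real (l \<bullet> x + b) * gauss l b h x / of_real h)"
  have "gauss_poly l b ?f'"
    by (intro gauss_poly.intros)
  moreover have "((\<lambda>s. gauss l b h (x + s *\<^sub>R axis k 1)) has_vector_derivative ?f' h x) (at 0)"
    if "0 < h" for h x
  proof -
    have "((\<lambda>s. gauss l b h (x + s *\<^sub>R axis k 1)) has_vector_derivative
        of_real (- 2 * l $ k * (l \<bullet> x + b) / h) * gauss l b h x) (at 0)"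
      by (rule has_vector_derivative_gauss_axis[OF that])
    also have "of_real (- 2 * l $ k * (l \<bullet> x + b) / h) * gauss l b h x = ?f' h x"
      by simp
    finally show ?thesis .
  qed
  ultimately show ?case by blast
next
  case (scale f c)
  then obtain f' where "gauss_poly l b f'"
      "\<And>h x. 0 < h \<Longrightarrow> ((\<lambda>s. f h (x + s *\<^sub>R axis k 1)) has_vector_derivative f' h x) (at 0)"
    by blast
  then show ?case
    by (intro exI[of _ "\<lambda>h x. c * f' h x"]) (auto intro: gauss_poly.scale derivative_intros)
next
  case (add f g)
  then show ?case by (auto intro!: gauss_poly.intros derivative_intros)
next
  case (divide_hbar f)
  then show ?case by (auto intro!: gauss_poly.intros derivative_intros)
next
  case (mult_affine f)
  then obtain f' where f': "gauss_poly l b f'"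
      "\<And>h x. 0 < h \<Longrightarrow> ((\<lambda>s. f h (x + s *\<^sub>R axis k 1)) has_vector_derivative f' h x) (at 0)"
    by blast
  let ?g = "\<lambda>h x. of_real (l \<bullet> x + b) * f' h x + of_real (l $ k) * f h x"
  have "gauss_poly l b ?g"
    using f'(1) mult_affine.hyps by (intro gauss_poly.intros)
  moreover have "((\<lambda>s. of_real (l \<bullet> (x + s *\<^sub>R axis k 1) + b) * f h (x + s *\<^sub>R axis k 1))
      has_vector_derivative ?g h x) (at 0)" if "0 < h" for h x
    using has_vector_derivative_mult[OF has_vector_derivative_affine_axis f'(2)[OF that]]
    by (simp add: algebra_simps)
  ultimately show ?case by blast
qed

lemma derivative_closed_gauss_poly: "derivative_closed (gauss_poly l b)"
  by unfold_locales
    (auto intro: gauss_poly_continuous gauss_poly_hbar_derivative gauss_poly_axis_derivative)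

lemma pd_const_mult_gauss:
  assumes "open U" "x \<in> U" "0 < h" "\<And>y. y \<in> U \<Longrightarrow> f y = c * gauss l b h y"
  shows "pd k f x = c * (of_real (- 2 * l $ k * (l \<bullet> x + b) / h) * gauss l b h x)"
proof -
  have "pd k f x = pd k (\<lambda>y. c * gauss l b h y) x"
    using assms(1,2,4) by (rule pd_cong_open)
  also have "\<dots> = c * (of_real (- 2 * l $ k * (l \<bullet> x + b) / h) * gauss l b h x)"
    unfolding pd_def
    by (intro vector_derivative_at has_vector_derivative_mult_right has_vector_derivative_gauss_axis assms(3))
  finally show ?thesis .
qed

lemma pd_affine:
  assumes "open U" "x \<in> U" "\<And>y. y \<in> U \<Longrightarrow> u y = l \<bullet> y + b"
  shows "pd k (\<lambda>y. complex_of_real (u y)) x = of_real (l $ k)"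
proof -
  have "pd k (\<lambda>y. complex_of_real (u y)) x = pd k (\<lambda>y. of_real (l \<bullet> y + b)) x"
    using assms by (intro pd_cong_open) auto
  also have "\<dots> = of_real (l $ k)"
    unfolding pd_def by (intro vector_derivative_at has_vector_derivative_affine_axis)
  finally show ?thesis .
qed

section \<open>Forms concentrated in degree one\<close>

definition degree_one :: "('n::finite) form \<Rightarrow> bool" where
  "degree_one \<alpha> \<longleftrightarrow> (\<forall>h x is. length is \<noteq> 1 \<longrightarrow> \<alpha> h x is = 0)"

lemma permutations_lessThan_1: "{\<sigma>. \<sigma> permutes {..<Suc 0}} = {id}"
  by (auto simp: lessThan_Suc)

lemma transpose_0_1_neq_id: "Transposition.transpose 0 1 \<noteq> (id :: nat \<Rightarrow> nat)"
  by (metis id_apply transpose_apply_first zero_neq_one)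

lemma permutations_lessThan_2: "{\<sigma>. \<sigma> permutes {..<2::nat}} = {id, Transposition.transpose 0 1}"
proof -
  have "card {id, Transposition.transpose 0 (1::nat)} = card {\<sigma>. \<sigma> permutes {..<2::nat}}"
    using card_permutations[of "{..<2::nat}" 2] transpose_0_1_neq_id by simp
  moreover have "{id, Transposition.transpose 0 1} \<subseteq> {\<sigma>. \<sigma> permutes {..<2::nat}}"
    by (auto intro!: permutes_swap_id)
  ultimately show ?thesis
    using card_subset_eq[OF finite_permutations[of "{..<2::nat}"]] by blast
qed

lemma degree_one_alternating:
  assumes "degree_one \<alpha>"
  shows "alternating \<alpha>"
  unfolding alternating_def
proof (intro allI impI)
  fix h x and "is" :: "'a list" and \<sigma>
  assume \<sigma>: "\<sigma> permutes {..<length is}"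
  show "\<alpha> h x (map (\<lambda>p. is ! \<sigma> p) [0..<length is]) = of_int (sign \<sigma>) * \<alpha> h x is"
  proof (cases "length is = 1")
    case True
    then obtain i where "is = [i]" by (cases "is") auto
    moreover have "\<sigma> = id" using \<sigma> permutations_lessThan_1 True by auto
    ultimately show ?thesis by simp
  next
    case False
    then show ?thesis using assms unfolding degree_one_def by simp
  qed
qed

lemma wedge_eq_0_if_factors_vanish:
  assumes "\<And>k \<sigma>. k \<le> length is \<Longrightarrow> \<sigma> permutes {..<length is} \<Longrightarrow>
     \<alpha> h x (map (\<lambda>p. is ! \<sigma> p) [0..<k]) = 0 \<or> \<beta> h x (map (\<lambda>p. is ! \<sigma> p) [k..<length is]) = 0"
  shows "wedge \<alpha> \<beta> h x is = 0"
  unfolding wedge_def using assms by (intro sum.neutral ballI) auto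

lemma wedge_zero_form:
  assumes "degree_one \<beta>"
  shows "wedge (zero_form f) \<beta> h x is = (if length is = 1 then f h x * \<beta> h x is else 0)"
proof (cases "length is = 1")
  case True
  then obtain i where i: "is = [i]" by (cases "is") auto
  have "wedge (zero_form f) \<beta> h x is =
    (\<Sum>k\<le>1. \<Sum>\<sigma>\<in>{id}. of_int (sign \<sigma>) / (fact k * fact (1 - k)) *
       zero_form f h x (map (\<lambda>p. is ! \<sigma> p) [0..<k]) * \<beta> h x (map (\<lambda>p. is ! \<sigma> p) [k..<1]))"
    unfolding wedge_def using True permutations_lessThan_1 by simp
  also have "\<dots> = f h x * \<beta> h x is" using i by (simp add: zero_form_def)
  finally show ?thesis using True by simp
next
  case False
  have "zero_form f h x (map (\<lambda>p. is ! \<sigma> p) [0..<k]) = 0 \<or> \<beta> h x (map (\<lambda>p. is ! \<sigma> p) [k..<length is]) = 0"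
    if "k \<le> length is" for k \<sigma>
    using False that assms unfolding degree_one_def zero_form_def by (cases k) auto
  then show ?thesis
    using False by (simp add: wedge_eq_0_if_factors_vanish)
qed

lemma wedge_degree_one:
  assumes "degree_one \<alpha>" "degree_one \<beta>"
  shows "wedge \<alpha> \<beta> h x is = (if length is = 2 then
     \<alpha> h x [is!0] * \<beta> h x [is!1] - \<alpha> h x [is!1] * \<beta> h x [is!0] else 0)"
proof (cases "length is = 2")
  case True
  have "wedge \<alpha> \<beta> h x is =
    (\<Sum>k\<le>2. \<Sum>\<sigma>\<in>{id, Transposition.transpose 0 1}. of_int (sign \<sigma>) / (fact k * fact (2 - k)) *
       \<alpha> h x (map (\<lambda>p. is ! \<sigma> p) [0..<k]) * \<beta> h x (map (\<lambda>p. is ! \<sigma> p) [k..<2]))"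
    unfolding wedge_def using True permutations_lessThan_2 by simp
  also have "\<dots> = \<alpha> h x [is!0] * \<beta> h x [is!1] - \<alpha> h x [is!1] * \<beta> h x [is!0]"
  proof -
    have "\<alpha> h x [] = 0" "\<And>u v. \<alpha> h x [u, v] = 0" "\<beta> h x [] = 0" "\<And>u v. \<beta> h x [u, v] = 0"
      using assms unfolding degree_one_def by auto
    with transpose_0_1_neq_id show ?thesis
      by (simp add: numeral_2_eq_2 atMost_Suc upt_rec sign_swap_id)
  qed
  finally show ?thesis using True by simp
next
  case False
  have "\<alpha> h x (map (\<lambda>p. is ! \<sigma> p) [0..<k]) = 0 \<or> \<beta> h x (map (\<lambda>p. is ! \<sigma> p) [k..<length is]) = 0"
    if "k \<le> length is" for k \<sigma>
    using False that assms unfolding degree_one_def by (cases "k = 1") auto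
  then show ?thesis
    using False by (simp add: wedge_eq_0_if_factors_vanish)
qed

lemma wedge_proportional_eq_0:
  assumes "degree_one \<alpha>" "degree_one \<beta>" "\<And>i. \<alpha> h x [i] = s * c i" "\<And>i. \<beta> h x [i] = t * c i"
  shows "wedge \<alpha> \<beta> h x is = 0"
  unfolding wedge_degree_one[OF assms(1,2)] assms(3,4) by (simp add: algebra_simps)

lemma degree_one_ext_d_zero_form: "degree_one (ext_d (zero_form f))"
  unfolding degree_one_def ext_d_def
proof (intro allI impI sum.neutral ballI)
  fix h x and "is" :: "'a list" and j
  assume "length is \<noteq> 1" "j \<in> {..<length is}"
  then have "take j is @ drop (Suc j) is \<noteq> []" by (cases "is") (auto simp: min_def)
  then have "(\<lambda>y. zero_form f h y (take j is @ drop (Suc j) is)) = (\<lambda>y. 0)"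
    by (auto simp: zero_form_def fun_eq_iff)
  then show "(- 1) ^ j * pd (is ! j) (\<lambda>y. zero_form f h y (take j is @ drop (Suc j) is)) x = 0"
    by (simp add: pd_def)
qed

lemma degree_one_delta_m: "degree_one (delta_m u)"
  unfolding degree_one_def delta_m_def by (simp add: wedge_zero_form[OF degree_one_ext_d_zero_form])

lemma delta_m_on_affine:
  assumes "open U" "y \<in> U" "\<And>y. y \<in> U \<Longrightarrow> u y = l \<bullet> y + b"
  shows "delta_m u h y [i] = of_real (l $ i) * gauss l b h y"
proof -
  have "delta_m u h y [i] =
      of_real (sqrt (1 / (h * pi)) * exp (- (u y)\<^sup>2 / h)) * ext_d (zero_form (\<lambda>h x. of_real (u x))) h y [i]"
    unfolding delta_m_def wedge_zero_form[OF degree_one_ext_d_zero_form] by (simp add: zero_form_def)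
  also have "ext_d (zero_form (\<lambda>h x. of_real (u x))) h y [i] = of_real (l $ i)"
    by (simp add: ext_d_def zero_form_def pd_affine[OF assms])
  finally show ?thesis
    using assms(2,3) by (simp add: gauss_def)
qed

section \<open>Constant multiples of delta_m\<close>

text \<open>The form agrees on U, at the value h of hbar, with c times delta_m for u2 = l \<bullet> x + b
  (see delta_m_on_affine).\<close>

definition delta_multiple ::
    "real^('n::finite) \<Rightarrow> real \<Rightarrow> (real^'n) set \<Rightarrow> real \<Rightarrow> 'n form \<Rightarrow> complex \<Rightarrow> bool"
  where "delta_multiple l b U h \<alpha> c \<longleftrightarrow>
    degree_one \<alpha> \<and> (\<forall>y\<in>U. \<forall>i. \<alpha> h y [i] = c * (of_real (l $ i) * gauss l b h y))"

lemma delta_multiple_scaled_delta_m: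
  assumes "open U" "\<And>y. y \<in> U \<Longrightarrow> u y = l \<bullet> y + b"
  shows "delta_multiple l b U h (\<lambda>h x is. c * delta_m u h x is) c"
  using degree_one_delta_m[of u] delta_m_on_affine[OF assms(1) _ assms(2)]
  unfolding delta_multiple_def degree_one_def by auto

lemma delta_multiple_deg_part:
  "delta_multiple l b U h \<alpha> c \<Longrightarrow> delta_multiple l b U h (deg_part p \<alpha>) (if p = 1 then c else 0)"
  unfolding delta_multiple_def degree_one_def deg_part_def by auto

lemma delta_multiple_singleton:
  "delta_multiple l b U h \<alpha> c \<Longrightarrow> y \<in> U \<Longrightarrow> \<alpha> h y [i] = (c * gauss l b h y) * of_real (l $ i)"
  unfolding delta_multiple_def by (simp add: ac_simps)

lemma pd_delta_multiple:
  assumes "open U" "x \<in> U" "0 < h" "delta_multiple l b U h \<alpha> c"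
  shows "pd k (\<lambda>y. \<alpha> h y [i]) x =
    c * of_real (l $ i) * (of_real (- 2 * l $ k * (l \<bullet> x + b) / h) * gauss l b h x)"
  using assms(1-3) by (rule pd_const_mult_gauss) (use assms(4) in \<open>simp add: delta_multiple_def\<close>)

lemma degree_one_nabla: "degree_one \<beta> \<Longrightarrow> degree_one (nabla v \<beta>)"
  unfolding degree_one_def nabla_def by (simp add: pd_def)

lemma nabla_delta_multiple_singleton:
  assumes "open U" "x \<in> U" "0 < h" "delta_multiple l b U h \<beta> c"
  shows "nabla v \<beta> h x [j] =
    (c * (\<Sum>k\<in>UNIV. of_real (v h x $ k) * of_real (- 2 * l $ k * (l \<bullet> x + b) / h)) * gauss l b h x)
      * of_real (l $ j)"
  unfolding nabla_def pd_delta_multiple[OF assms]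
  by (simp add: sum_distrib_left sum_distrib_right ac_simps)

lemma wedge_delta_multiples_eq_0:
  assumes "delta_multiple l b U h \<alpha> c" "delta_multiple l b U h \<beta> c'" "x \<in> U"
  shows "wedge \<alpha> \<beta> h x is = 0"
  using assms
  by (intro wedge_proportional_eq_0[where c = "\<lambda>i. of_real (l $ i)"] delta_multiple_singleton)
    (auto simp: delta_multiple_def)

lemma wedge_delta_multiple_nabla_eq_0:
  assumes "open U" "x \<in> U" "0 < h" "delta_multiple l b U h \<alpha> c" "delta_multiple l b U h \<beta> c'"
  shows "wedge \<alpha> (nabla v \<beta>) h x is = 0"
proof -
  have "degree_one \<alpha>" "degree_one (nabla v \<beta>)"
    using assms(4,5) degree_one_nabla by (auto simp: delta_multiple_def)
  then show ?thesis
    by (rule wedge_proportional_eq_0[where \<alpha> = \<alpha> and \<beta> = "nabla v \<beta>" and h = h and x = x,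
          OF _ _ delta_multiple_singleton[OF assms(4,2)] nabla_delta_multiple_singleton[OF assms(1-3,5)]])
qed

lemma br_gen_delta_multiples_eq_0:
  assumes "open U" "x \<in> U" "0 < h" "delta_multiple l b U h \<alpha> c" "delta_multiple l b U h \<beta> c'"
  shows "br_gen g p q \<alpha> m n \<beta> m' n' M i h x is = 0"
  using wedge_delta_multiples_eq_0[OF assms(4,5,2)]
    wedge_delta_multiple_nabla_eq_0[OF assms] wedge_delta_multiple_nabla_eq_0[OF assms(1-3,5,4)]
  by (simp add: br_gen_def mono_def zform_def)

lemma ext_d_delta_multiple_eq_0:
  assumes "open U" "x \<in> U" "0 < h" "delta_multiple l b U h \<alpha> c"
  shows "ext_d \<alpha> h x is = 0"
proof (cases "length is = 2")
  case True
  then obtain i j where "is = [i, j]"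
    by (cases "is"; cases "tl is") (auto simp: numeral_2_eq_2)
  then show ?thesis
    using assms(3) by (simp add: ext_d_def numeral_2_eq_2 pd_delta_multiple[OF assms] field_simps)
next
  case False
  have "pd (is ! j) (\<lambda>y. \<alpha> h y (take j is @ drop (Suc j) is)) x = 0" if "j < length is" for j
  proof -
    have "(\<lambda>y. \<alpha> h y (take j is @ drop (Suc j) is)) = (\<lambda>y. 0)"
      using False that assms(4) by (auto simp: delta_multiple_def degree_one_def min_def)
    then show ?thesis by (simp add: pd_def)
  qed
  then show ?thesis
    by (auto simp: ext_d_def intro!: sum.neutral)
qed

lemma is_kform_scaled_delta_m:
  assumes "open U" "\<And>y. y \<in> U \<Longrightarrow> u y = l \<bullet> y + b"
  shows "is_kform U 1 (\<lambda>h x is. c * delta_m u h x is)"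
proof -
  have deg: "degree_one (\<lambda>h x is. c * delta_m u h x is)"
    using degree_one_delta_m[of u] by (simp add: degree_one_def)
  have "smooth_HU U (\<lambda>h x. c * delta_m u h x is)" for "is"
  proof (rule derivative_closed.smooth_HU_of_eq_on[OF derivative_closed_gauss_poly assms(1)])
    show "gauss_poly l b (\<lambda>h x. (if length is = 1 then c * of_real (l $ hd is) else 0) * gauss l b h x)"
      by (intro gauss_poly.scale gauss_poly.gauss)
    show "c * delta_m u h x is = (if length is = 1 then c * of_real (l $ hd is) else 0) * gauss l b h x"
      if "x \<in> U" for h x
    proof (cases "length is = 1")
      case True
      then obtain i where "is = [i]" by (cases "is") auto
      then show ?thesis using delta_m_on_affine[OF assms(1) that assms(2)] by simp
    next
      case False
      then show ?thesis using degree_one_delta_m[of u] by (simp add: degree_one_def)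
    qed
  qed
  with deg show ?thesis
    by (simp add: is_kform_def degree_one_alternating) (simp add: degree_one_def)
qed

lemma Gbr_delta_multiples_eq_0:
  assumes "open U" "x \<in> U" "0 < h"
    and "\<And>M i. delta_multiple l b U h (A M i) (cA M i)" "\<And>M i. delta_multiple l b U h (B M i) (cB M i)"
  shows "Gbr g A B M i h x is = 0"
  unfolding Gbr_def
  by (simp add: br_gen_delta_multiples_eq_0[OF assms(1-3) delta_multiple_deg_part[OF assms(4)]
        delta_multiple_deg_part[OF assms(5)]])

section \<open>The Maurer-Cartan element of a wall\<close>

definition wall_coeff ::
    "int^('n::finite) \<Rightarrow> int^'n \<Rightarrow> (nat \<Rightarrow> nat \<Rightarrow> complex) \<Rightarrow> nat \<Rightarrow> int^'n \<Rightarrow> 'n \<Rightarrow> complex"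
  where "wall_coeff m n a j M i = (if j = 0 then 0 else
     - (\<Sum>k\<in>{k. 1 \<le> k \<and> a j k \<noteq> 0}. a j k * (if M = int k *s m then of_int (n $ i) else 0)))"

lemma wall_Pi_eq_scaled_delta_m:
  "wall_Pi u m n a j M i = (\<lambda>h x is. wall_coeff m n a j M i * delta_m u h x is)"
  unfolding wall_Pi_def wall_coeff_def mono_def zform_def
  by (auto simp: sum_distrib_right intro!: ext sum.cong)

lemma finite_Gsupp_wall_Pi:
  assumes "finite {k. 1 \<le> k \<and> a j k \<noteq> 0}"
  shows "finite (Gsupp (wall_Pi u m n a j))"
proof -
  have "wall_coeff m n a j M i = 0" if "M \<notin> (\<lambda>k. int k *s m) ` {k. 1 \<le> k \<and> a j k \<noteq> 0}" for M i
    using that unfolding wall_coeff_def by (auto intro!: sum.neutral)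
  then have "Gsupp (wall_Pi u m n a j) \<subseteq> (\<lambda>k. int k *s m) ` {k. 1 \<le> k \<and> a j k \<noteq> 0}"
    unfolding Gsupp_def wall_Pi_eq_scaled_delta_m zform_def by auto
  with assms show ?thesis
    using finite_surj by blast
qed

lemma in_Ghat_wall_Pi:
  assumes "open U" "\<And>y. y \<in> U \<Longrightarrow> u y = l \<bullet> y + b" "\<forall>j\<ge>1. finite {k. 1 \<le> k \<and> a j k \<noteq> 0}"
  shows "in_Ghat U 1 (wall_Pi u m n a)"
proof -
  have "finite (Gsupp (wall_Pi u m n a j))" for j
  proof (cases "j = 0")
    case True
    then have "Gsupp (wall_Pi u m n a j) = {}"
      by (simp add: Gsupp_def wall_Pi_def zform_def)
    then show ?thesis by simp
  next
    case False
    then show ?thesis using assms(3) by (simp add: finite_Gsupp_wall_Pi)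
  qed
  then show ?thesis
    unfolding in_Ghat_def wall_Pi_eq_scaled_delta_m using is_kform_scaled_delta_m[OF assms(1,2)] by blast
qed

lemma maurer_cartan_wall_Pi:
  assumes "open U" "\<And>y. y \<in> U \<Longrightarrow> u y = l \<bullet> y + b"
  shows "maurer_cartan U g (wall_Pi u m n a)"
  unfolding maurer_cartan_def
proof (intro allI impI)
  fix j M i and h :: real and x "is"
  assume "0 < h" "x \<in> U"
  have \<delta>: "delta_multiple l b U h (wall_Pi u m n a j M i) (wall_coeff m n a j M i)" for j M i
    unfolding wall_Pi_eq_scaled_delta_m by (rule delta_multiple_scaled_delta_m[OF assms])
  have "Ghat_dbar (wall_Pi u m n a) j M i h x is = 0"
    unfolding Ghat_dbar_def using ext_d_delta_multiple_eq_0[OF assms(1) \<open>x \<in> U\<close> \<open>0 < h\<close> \<delta>] .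
  moreover have "Ghat_br g (wall_Pi u m n a) (wall_Pi u m n a) j M i h x is = 0"
    unfolding Ghat_br_def
    by (simp add: Gbr_delta_multiples_eq_0[OF assms(1) \<open>x \<in> U\<close> \<open>0 < h\<close> \<delta> \<delta>])
  ultimately show "Ghat_dbar (wall_Pi u m n a) j M i h x is
      + 1 / 2 * Ghat_br g (wall_Pi u m n a) (wall_Pi u m n a) j M i h x is = 0"
    by simp
qed

theorem proposition4p4:
  fixes U :: "(real^'n) set" and g :: "real^'n \<Rightarrow> real^'n^'n"
    and m n :: "int^'n" and P :: "(real^'n) set" and \<nu> :: "real^'n"
    and a :: "nat \<Rightarrow> nat \<Rightarrow> complex" and u2 :: "real^'n \<Rightarrow> real"
  assumes "convex U" and "open U"
    and "hessian_metric U g"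
    and "is_wall U m P \<nu> n a"
    and "\<exists>l b. \<forall>x\<in>U. u2 x = l \<bullet> x + b"
    and "P = {x \<in> U. u2 x = 0}"
    and "\<forall>x\<in>half_plus U P \<nu>. u2 x > 0"
  shows "in_Ghat U 1 (wall_Pi u2 m n a) \<and> maurer_cartan U g (wall_Pi u2 m n a)"
proof -
  obtain l b where affine: "\<And>y. y \<in> U \<Longrightarrow> u2 y = l \<bullet> y + b"
    using assms(5) by blast
  have "\<forall>j\<ge>1. finite {k. 1 \<le> k \<and> a j k \<noteq> 0}"
    using assms(4) by (simp add: is_wall_def)
  then show ?thesis
    using in_Ghat_wall_Pi[OF assms(2) affine] maurer_cartan_wall_Pi[OF assms(2) affine] by blast
qed

end
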